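(* Let $\langle c^m,c^M\rangle$ be a cell of size $n$. Let $c$ be any $(n-1)$-tuple such that $c_i\in\{c^m_i,c^M_i\}$ for every $i\in[n-1]$. Then $c$ is a cubic coordinate.
   Context: A Tamari diagram of size $n$ is a word $u=u_1\cdots u_n$ of integers with $0\leq u_i\leq n-i$ and $u_{i+j}\leq u_i-j$ for all $i\in[n]$, $0\leq j\leq u_i$. A dual Tamari diagram of size $n$ is a word $v$ of integers with $0\leq v_i\leq i-1$ and $v_{i-j}\leq v_i-j$ for all $i\in[n]$, $0\leq j\leq v_i$. $(u,v)$ is a Tamari interval diagram if moreover for all $1\leq i<j\leq n$ with $j-i\leq u_i$ one has $v_j<j-i$. A cubic coordinate of size $n$ is $c\in\mathbb{Z}^{n-1}$ such that $(u,v)$ with $u_i=\max(c_i,0)$ ($i\in[n-1]$), $u_n=0$, $v_1=0$, $v_i=|\min(c_{i-1},0)|$ ($2\leq i\leq n$) is a Tamari interval diagram. For a cubic coordinate $c$ and $i\in[n-1]$, the minimal increase $\uparrow_i(c)$ is defined when there exists a cubic coordinate agreeing with $c$ outside position $i$ and with $i$-th entry $>c_i$; then $\uparrow_i(c)$ is obtained from $c$ by replacing $c_i$ by the smallest integer $t>c_i$ such that the result is a cubic coordinate. $c$ is minimal-cellular if $\uparrow_i(c)$ is defined for all $i\in[n-1]$. A cell of size $n$ is a pair $\langle c^m,c^M\rangle$ where $c^m$ is a minimal-cellular cubic coordinate of size $n$ and $c^M=\uparrow_1(\uparrow_2(\cdots(\uparrow_{n-1}(c^m))\cdots))$ (every step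 of this composition is defined). *)

theory Defs
  imports Main
begin

text \<open>Words are indexed 1..n; a word of size n is a function nat => int,
  only positions 1..n matter. A cubic coordinate of size n is an int list of
  length n-1, where c_i is c ! (i-1).\<close>

definition tamari_diagram :: "nat \<Rightarrow> (nat \<Rightarrow> int) \<Rightarrow> bool" where
  "tamari_diagram n u \<longleftrightarrow>
     (\<forall>i\<in>{1..n}. 0 \<le> u i \<and> u i \<le> int n - int i \<and>
        (\<forall>j::nat. int j \<le> u i \<longrightarrow> u (i + j) \<le> u i - int j))"

definition dual_tamari_diagram :: "nat \<Rightarrow> (nat \<Rightarrow> int) \<Rightarrow> bool" where
  "dual_tamari_diagram n v \<longleftrightarrow>
     (\<forall>i\<in>{1..n}. 0 \<le> v i \<and> v i \<le> int i - 1 \<and>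
        (\<forall>j::nat. int j \<le> v i \<longrightarrow> v (i - j) \<le> v i - int j))"

definition tamari_interval_diagram :: "nat \<Rightarrow> (nat \<Rightarrow> int) \<Rightarrow> (nat \<Rightarrow> int) \<Rightarrow> bool" where
  "tamari_interval_diagram n u v \<longleftrightarrow>
     tamari_diagram n u \<and> dual_tamari_diagram n v \<and>
     (\<forall>i j. 1 \<le> i \<and> i < j \<and> j \<le> n \<and> int (j - i) \<le> u i \<longrightarrow> v j < int (j - i))"

definition u_of :: "nat \<Rightarrow> int list \<Rightarrow> nat \<Rightarrow> int" where
  "u_of n c i = (if 1 \<le> i \<and> i \<le> n - 1 then max (c ! (i - 1)) 0 else 0)"

definition v_of :: "nat \<Rightarrow> int list \<Rightarrow> nat \<Rightarrow> int" where
  "v_of n c i = (if 2 \<le> i \<and> i \<le> n then \<bar>min (c ! (i - 2)) 0\<bar> else 0)"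

definition cubic_coordinate :: "nat \<Rightarrow> int list \<Rightarrow> bool" where
  "cubic_coordinate n c \<longleftrightarrow>
     length c = n - 1 \<and> tamari_interval_diagram n (u_of n c) (v_of n c)"

definition min_incr_defined :: "nat \<Rightarrow> nat \<Rightarrow> int list \<Rightarrow> bool" where
  "min_incr_defined n i c \<longleftrightarrow>
     (\<exists>t. t > c ! (i - 1) \<and> cubic_coordinate n (c[i - 1 := t]))"

definition min_incr :: "nat \<Rightarrow> nat \<Rightarrow> int list \<Rightarrow> int list option" where
  "min_incr n i c =
     (if min_incr_defined n i c
      then Some (c[i - 1 := (LEAST t. t > c ! (i - 1) \<and> cubic_coordinate n (c[i - 1 := t]))])
      else None)"

definition minimal_cellular :: "nat \<Rightarrow> int list \<Rightarrow> bool" where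
  "minimal_cellular n c \<longleftrightarrow>
     cubic_coordinate n c \<and> (\<forall>i\<in>{1..n - 1}. min_incr_defined n i c)"

text \<open>Composition up_1(up_2(...(up_{n-1}(c))...)): apply positions n-1, n-2, ..., 1
  in turn; None if some step is undefined.\<close>

fun incr_chain :: "nat \<Rightarrow> nat \<Rightarrow> int list \<Rightarrow> int list option" where
  "incr_chain n 0 c = Some c"
| "incr_chain n (Suc k) c =
     (case min_incr n (Suc k) c of None \<Rightarrow> None | Some c' \<Rightarrow> incr_chain n k c')"

definition is_cell :: "nat \<Rightarrow> int list \<Rightarrow> int list \<Rightarrow> bool" where
  "is_cell n cm cM \<longleftrightarrow> minimal_cellular n cm \<and> incr_chain n (n - 1) cm = Some cM"

end

theory Submission
  imports Defs
begin

text \<open>Cubic coordinates are characterised by conditions on pairs of entries. Along the chain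
  from \<open>c\<^sup>m\<close> to \<open>c\<^sup>M\<close> every intermediate tuple \<open>(c\<^sup>m\<^sub>1, \<dots>, c\<^sup>m\<^sub>p, c\<^sup>M\<^sub>p\<^sub>+\<^sub>1, \<dots>)\<close> is a cubic coordinate,
  which makes the pairs \<open>(c\<^sup>m\<^sub>i, c\<^sup>m\<^sub>j)\<close>, \<open>(c\<^sup>M\<^sub>i, c\<^sup>M\<^sub>j)\<close> and \<open>(c\<^sup>m\<^sub>i, c\<^sup>M\<^sub>j)\<close> compatible for \<open>i < j\<close>.
  The remaining pair \<open>(c\<^sup>M\<^sub>i, c\<^sup>m\<^sub>j)\<close> can only fail if \<open>c\<^sup>M\<^sub>i > j - i\<close> and \<open>c\<^sup>m\<^sub>j < i - j\<close>; this is
  excluded by induction on \<open>j - i\<close>: the induction hypothesis shows that setting the \<open>i\<close>-th entry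
  of the intermediate tuple to \<open>j - i\<close> still gives a cubic coordinate, and \<open>c\<^sup>m\<^sub>i < j - i\<close> because
  \<open>c\<^sup>m\<close> is minimal-cellular, contradicting the minimality of the increase from \<open>c\<^sup>m\<^sub>i\<close> to \<open>c\<^sup>M\<^sub>i\<close>.\<close>

text \<open>For 0-based positions \<open>i < j\<close> of a cubic coordinate at distance \<open>d = j - i\<close>, with entries
  \<open>x\<close> and \<open>y\<close>, the three conjuncts are the Tamari, dual Tamari and interval conditions.\<close>

definition compatible :: "int \<Rightarrow> int \<Rightarrow> int \<Rightarrow> bool" where
  "compatible d x y \<longleftrightarrow>
     (d \<le> x \<longrightarrow> y \<le> x - d) \<and> (y \<le> - d \<longrightarrow> y + d \<le> x) \<and> (d < x \<longrightarrow> - d \<le> y)"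

definition pairwise_cubic :: "nat \<Rightarrow> int list \<Rightarrow> bool" where
  "pairwise_cubic n c \<longleftrightarrow> length c = n - 1 \<and>
     (\<forall>i<n - 1. - int i - 1 \<le> c ! i \<and> c ! i \<le> int n - int i - 1) \<and>
     (\<forall>i j. i < j \<longrightarrow> j < n - 1 \<longrightarrow> compatible (int j - int i) (c ! i) (c ! j))"

lemma cubic_coordinate_imp_pairwise_cubic:
  assumes "cubic_coordinate n c"
  shows "pairwise_cubic n c"
proof -
  have T: "tamari_diagram n (u_of n c)" and D: "dual_tamari_diagram n (v_of n c)"
    and I: "\<And>i j. 1 \<le> i \<and> i < j \<and> j \<le> n \<and> int (j - i) \<le> u_of n c i \<Longrightarrow> v_of n c j < int (j - i)"
    using assms by (auto simp: cubic_coordinate_def tamari_interval_diagram_def)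
  have u: "u_of n c (i + 1) = max (c ! i) 0" and v: "v_of n c (i + 2) = \<bar>min (c ! i) 0\<bar>"
    if "i < n - 1" for i
    using that by (auto simp: u_of_def v_of_def)
  have bounds: "- int i - 1 \<le> c ! i \<and> c ! i \<le> int n - int i - 1" if i: "i < n - 1" for i
  proof -
    have "i + 1 \<in> {1..n}" "i + 2 \<in> {1..n}" using i by auto
    then have "u_of n c (i + 1) \<le> int n - int (i + 1)" "v_of n c (i + 2) \<le> int (i + 2) - 1"
      using T D unfolding tamari_diagram_def dual_tamari_diagram_def by blast+
    then show ?thesis using u[OF i] v[OF i] by auto
  qed
  have pairs: "compatible (int j - int i) (c ! i) (c ! j)" if ij: "i < j" "j < n - 1" for i j
  proof -
    have "i + 1 \<in> {1..n}" "j + 2 \<in> {1..n}" using ij by auto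
    note mem = this
    have tam: "int (j - i) \<le> u_of n c (i + 1) \<Longrightarrow>
        u_of n c (i + 1 + (j - i)) \<le> u_of n c (i + 1) - int (j - i)"
      using T mem(1) unfolding tamari_diagram_def by blast
    have dual: "int (j - i) \<le> v_of n c (j + 2) \<Longrightarrow>
        v_of n c (j + 2 - (j - i)) \<le> v_of n c (j + 2) - int (j - i)"
      using D mem(2) unfolding dual_tamari_diagram_def by blast
    have entries: "u_of n c (i + 1) = max (c ! i) 0" "u_of n c (j + 1) = max (c ! j) 0"
        "v_of n c (i + 2) = \<bar>min (c ! i) 0\<bar>" "v_of n c (j + 2) = \<bar>min (c ! j) 0\<bar>"
      using u v ij by auto
    have "i + 1 + (j - i) = j + 1" "j + 2 - (j - i) = i + 2" "j + 2 - (i + 1) = Suc (j - i)"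
        "Suc (Suc j) \<le> n"
      using ij by auto
    with tam dual I[of "i + 1" "j + 2"] entries ij show ?thesis
      by (auto simp: compatible_def)
  qed
  show ?thesis
    using assms bounds pairs by (simp add: pairwise_cubic_def cubic_coordinate_def)
qed

lemma pairwise_cubic_imp_cubic_coordinate:
  assumes "pairwise_cubic n c"
  shows "cubic_coordinate n c"
proof -
  have len: "length c = n - 1"
    and bounds: "\<And>i. i < n - 1 \<Longrightarrow> - int i - 1 \<le> c ! i \<and> c ! i \<le> int n - int i - 1"
    and pairs: "\<And>i j. i < j \<Longrightarrow> j < n - 1 \<Longrightarrow> compatible (int j - int i) (c ! i) (c ! j)"
    using assms by (auto simp: pairwise_cubic_def)
  have T: "tamari_diagram n (u_of n c)"
    unfolding tamari_diagram_def
  proof (intro ballI conjI allI impI)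
    fix i assume i: "i \<in> {1..n}"
    show "0 \<le> u_of n c i" by (simp add: u_of_def)
    show "u_of n c i \<le> int n - int i" using i bounds[of "i - 1"] by (auto simp: u_of_def)
    fix j :: nat assume j: "int j \<le> u_of n c i"
    show "u_of n c (i + j) \<le> u_of n c i - int j"
    proof (cases "j = 0 \<or> n - 1 < i + j")
      case True
      then show ?thesis using j by (auto simp: u_of_def)
    next
      case False
      then have i': "1 \<le> i" "i \<le> n - 1" and cj: "int j \<le> c ! (i - 1)"
        using j by (auto simp: u_of_def split: if_splits)
      have "int (i + j - 1) - int (i - 1) = int j" using i' by auto
      then have "compatible (int j) (c ! (i - 1)) (c ! (i + j - 1))"
        using pairs[of "i - 1" "i + j - 1"] False i' by auto
      then show ?thesis using cj False i' by (auto simp: compatible_def u_of_def)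
    qed
  qed
  have D: "dual_tamari_diagram n (v_of n c)"
    unfolding dual_tamari_diagram_def
  proof (intro ballI conjI allI impI)
    fix i assume i: "i \<in> {1..n}"
    show "0 \<le> v_of n c i" by (simp add: v_of_def)
    have "2 \<le> i \<Longrightarrow> i - 2 < n - 1" using i by auto
    then show "v_of n c i \<le> int i - 1" using i bounds[of "i - 2"] by (auto simp: v_of_def)
    fix j :: nat assume j: "int j \<le> v_of n c i"
    show "v_of n c (i - j) \<le> v_of n c i - int j"
    proof (cases "j = 0 \<or> i - j < 2")
      case True
      then show ?thesis using j by (auto simp: v_of_def numeral_2_eq_2)
    next
      case False
      then have i': "2 \<le> i" "i \<le> n" and cj: "c ! (i - 2) \<le> - int j"
        using j by (auto simp: v_of_def split: if_splits)
      have "int (i - 2) - int (i - j - 2) = int j" using False by auto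
      then have "compatible (int j) (c ! (i - j - 2)) (c ! (i - 2))"
        using pairs[of "i - j - 2" "i - 2"] False i' by auto
      then show ?thesis using cj False i' by (auto simp: compatible_def v_of_def)
    qed
  qed
  have I: "v_of n c j < int (j - i)"
    if ij: "1 \<le> i \<and> i < j \<and> j \<le> n \<and> int (j - i) \<le> u_of n c i" for i j
  proof -
    have i': "i \<le> n - 1" and ci: "int (j - i) \<le> c ! (i - 1)"
      using ij by (auto simp: u_of_def split: if_splits)
    have vj: "v_of n c j = \<bar>min (c ! (j - 2)) 0\<bar>" using ij by (auto simp: v_of_def)
    show ?thesis
    proof (cases "j = i + 1")
      case True
      then show ?thesis using vj ci by auto
    next
      case False
      have "int (j - 2) - int (i - 1) = int (j - i) - 1" using ij False by auto
      then have "compatible (int (j - i) - 1) (c ! (i - 1)) (c ! (j - 2))"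
        using pairs[of "i - 1" "j - 2"] False ij by auto
      then have "1 - int (j - i) \<le> c ! (j - 2)" using ci unfolding compatible_def by linarith
      then show ?thesis using vj ij by (simp add: min_def abs_if)
    qed
  qed
  show ?thesis
    using len T D I unfolding cubic_coordinate_def tamari_interval_diagram_def by blast
qed

lemma cubic_coordinate_iff_pairwise_cubic: "cubic_coordinate n c \<longleftrightarrow> pairwise_cubic n c"
  using cubic_coordinate_imp_pairwise_cubic pairwise_cubic_imp_cubic_coordinate by blast

lemma cubic_coordinate_update_zero:
  assumes "cubic_coordinate n c" "a < n - 1"
  shows "cubic_coordinate n (c[a := 0])"
proof -
  have pw: "pairwise_cubic n c" using assms(1) cubic_coordinate_iff_pairwise_cubic by blast
  have "compatible (int j - int i) (c[a := 0] ! i) (c[a := 0] ! j)"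
    if ij: "i < j" "j < n - 1" for i j
  proof (cases "a = i \<or> a = j")
    case True
    then show ?thesis using ij pw by (auto simp: pairwise_cubic_def compatible_def)
  next
    case False
    then show ?thesis using ij pw by (simp add: pairwise_cubic_def)
  qed
  with pw assms(2) have "pairwise_cubic n (c[a := 0])"
    unfolding pairwise_cubic_def by (simp add: nth_list_update)
  then show ?thesis using cubic_coordinate_iff_pairwise_cubic by blast
qed

lemma cubic_coordinate_lower_entry:
  assumes c: "cubic_coordinate n c" and a: "a < n - 1"
    and D: "0 \<le> D" "D \<le> c ! a"
    and right: "\<And>j. a < j \<Longrightarrow> j < n - 1 \<Longrightarrow> int j - int a \<le> D \<Longrightarrow> c ! j \<le> D - (int j - int a)"
  shows "cubic_coordinate n (c[a := D])"
proof -
  have pw: "pairwise_cubic n c" using c cubic_coordinate_iff_pairwise_cubic by blast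
  then have "pairwise_cubic n (c[a := D])"
    using D a right unfolding pairwise_cubic_def
    by (fastforce simp: nth_list_update compatible_def)
  then show ?thesis using cubic_coordinate_iff_pairwise_cubic by blast
qed

lemma Least_int_bounded_below:
  fixes P :: "int \<Rightarrow> bool"
  assumes "P t" and bounded: "\<And>s. P s \<Longrightarrow> b < s"
  shows "P (LEAST s. P s) \<and> (\<forall>s. P s \<longrightarrow> (LEAST s. P s) \<le> s)"
proof -
  define k where "k = (LEAST k::nat. P (b + 1 + int k))"
  have shift: "s = b + 1 + int (nat (s - b - 1))" if "P s" for s
    using bounded[OF that] by simp
  have Pk: "P (b + 1 + int k)"
    unfolding k_def by (rule LeastI[of _ "nat (t - b - 1)"]) (use shift assms(1) in auto)
  have le: "b + 1 + int k \<le> s" if "P s" for s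
  proof -
    have "k \<le> nat (s - b - 1)"
      unfolding k_def by (rule Least_le) (use shift that in auto)
    then show ?thesis using shift[OF that] by linarith
  qed
  have "(LEAST s. P s) = b + 1 + int k"
    by (rule Least_equality) (use Pk le in auto)
  then show ?thesis using Pk le by simp
qed

lemma min_incr_SomeD:
  assumes "min_incr n p s = Some s'" and "p - 1 < length s"
  shows "cubic_coordinate n s' \<and> s ! (p - 1) < s' ! (p - 1) \<and>
    (\<forall>t. s ! (p - 1) < t \<and> cubic_coordinate n (s[p - 1 := t]) \<longrightarrow> s' ! (p - 1) \<le> t)"
proof -
  define P where "P t \<longleftrightarrow> s ! (p - 1) < t \<and> cubic_coordinate n (s[p - 1 := t])" for t
  have "min_incr_defined n p s" and s': "s' = s[p - 1 := LEAST t. P t]"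
    using assms by (auto simp: min_incr_def P_def split: if_splits)
  then obtain t where "P t" by (auto simp: min_incr_defined_def P_def)
  then have "P (LEAST t. P t) \<and> (\<forall>t. P t \<longrightarrow> (LEAST t. P t) \<le> t)"
    by (rule Least_int_bounded_below[where b = "s ! (p - 1)"]) (simp add: P_def)
  with s' assms(2) show ?thesis by (auto simp: P_def)
qed

lemma incr_chain_SomeD:
  assumes "incr_chain n k c = Some d" and "k \<le> length c"
  shows "length d = length c \<and> drop k d = drop k c \<and>
    (\<forall>p\<in>{1..k}. min_incr n p (take p c @ drop p d) = Some (take (p - 1) c @ drop (p - 1) d))"
  using assms
proof (induction k arbitrary: c)
  case 0
  then show ?case by simp
next
  case (Suc k)
  obtain c' where c': "min_incr n (Suc k) c = Some c'" and rest: "incr_chain n k c' = Some d"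
    using Suc.prems(1) by (auto split: option.splits)
  obtain t where c'_def: "c' = c[k := t]" using c' by (auto simp: min_incr_def split: if_splits)
  have k: "k < length c" using Suc.prems(2) by simp
  have IH: "length d = length c' \<and> drop k d = drop k c' \<and>
      (\<forall>p\<in>{1..k}. min_incr n p (take p c' @ drop p d) = Some (take (p - 1) c' @ drop (p - 1) d))"
    using Suc.IH[OF rest] k c'_def by simp
  have take_c': "take p c' = take p c" if "p \<le> k" for p using c'_def that by simp
  have drop_d: "drop (Suc k) d = drop (Suc k) c"
  proof -
    have "drop (Suc k) d = drop 1 (drop k c')" using IH by (metis drop_drop plus_1_eq_Suc)
    then show ?thesis using c'_def k by simp
  qed
  have "take (Suc k) c @ drop (Suc k) d = c" "take k c @ drop k d = c'"
    using drop_d IH take_c'[of k] by (simp, metis append_take_drop_id order_refl)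
  then have last: "min_incr n (Suc k) (take (Suc k) c @ drop (Suc k) d) = Some (take k c @ drop k d)"
    using c' by simp
  show ?case
    using IH c'_def drop_d last take_c' by (auto simp: le_Suc_eq)
qed

locale cell =
  fixes n :: nat and cm cM :: "int list"
  assumes is_cell: "is_cell n cm cM"
begin

text \<open>\<open>state p\<close> is the tuple reached after raising the last \<open>n - 1 - p\<close> entries, so the chain
  runs from \<open>state (n - 1) = cm\<close> down to \<open>state 0 = cM\<close>.\<close>

definition state :: "nat \<Rightarrow> int list" where
  "state p = take p cm @ drop p cM"

lemma cubic_coordinate_cm: "cubic_coordinate n cm"
  using is_cell by (simp add: is_cell_def minimal_cellular_def)

lemma length_cm: "length cm = n - 1"
  using cubic_coordinate_cm by (simp add: cubic_coordinate_def)

lemma length_cM: "length cM = n - 1"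
  using incr_chain_SomeD[of n "n - 1" cm cM] is_cell length_cm by (simp add: is_cell_def)

lemma min_incr_state: "p \<in> {1..n - 1} \<Longrightarrow> min_incr n p (state p) = Some (state (p - 1))"
  using incr_chain_SomeD[of n "n - 1" cm cM] is_cell length_cm
  by (simp add: is_cell_def state_def)

lemma nth_state: "k < n - 1 \<Longrightarrow> state p ! k = (if k < p then cm ! k else cM ! k)"
  using length_cm length_cM by (auto simp: state_def nth_append min_def)

lemma length_state: "length (state p) = n - 1"
  using length_cm length_cM by (simp add: state_def)

lemma state_eq_cM: "state 0 = cM"
  by (simp add: state_def)

lemma state_update: "a < n - 1 \<Longrightarrow> (state (Suc a)) [a := t] = (state a) [a := t]"
  by (rule nth_equalityI) (auto simp: length_state nth_list_update nth_state)

lemma state_step: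
  assumes "a < n - 1"
  shows "cubic_coordinate n (state a) \<and> cm ! a < cM ! a \<and>
    (\<forall>t. cm ! a < t \<and> cubic_coordinate n ((state (Suc a)) [a := t]) \<longrightarrow> cM ! a \<le> t)"
proof -
  have "min_incr n (Suc a) (state (Suc a)) = Some (state a)" using min_incr_state assms by simp
  from min_incr_SomeD[OF this] have "cubic_coordinate n (state a)"
      "state (Suc a) ! a < state a ! a"
      "\<forall>t. state (Suc a) ! a < t \<and> cubic_coordinate n ((state (Suc a)) [a := t]) \<longrightarrow>
         state a ! a \<le> t"
    using assms by (simp_all add: length_state)
  then show ?thesis using assms by (simp add: nth_state)
qed

lemma cubic_coordinate_state: "cubic_coordinate n (state p)"
proof (cases "p < n - 1")
  case False
  then have "state p = cm" using length_cm length_cM by (simp add: state_def)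
  then show ?thesis using cubic_coordinate_cm by simp
qed (use state_step in blast)

lemma cm_less_cM: "a < n - 1 \<Longrightarrow> cm ! a < cM ! a"
  using state_step by blast

lemma cM_minimal:
  "a < n - 1 \<Longrightarrow> cm ! a < t \<Longrightarrow> cubic_coordinate n ((state (Suc a)) [a := t]) \<Longrightarrow> cM ! a \<le> t"
  using state_step by blast

lemma cm_increasable:
  assumes "a < n - 1"
  shows "\<exists>t > cm ! a. cubic_coordinate n (cm[a := t])"
proof -
  have "min_incr_defined n (Suc a) cm"
    using is_cell assms by (simp add: is_cell_def minimal_cellular_def)
  then show ?thesis by (simp add: min_incr_defined_def)
qed

lemma no_crossing:
  assumes "a < b" "b < n - 1"
  shows "\<not> (int b - int a < cM ! a \<and> cm ! b < - (int b - int a))"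
  using assms
proof (induction "b - a" arbitrary: a rule: less_induct)
  case less
  define D where "D = int b - int a"
  show ?case
  proof
    assume "int b - int a < cM ! a \<and> cm ! b < - (int b - int a)"
    then have D_lt: "D < cM ! a" and cm_b: "cm ! b < - D" by (auto simp: D_def)
    have a: "a < n - 1" and D_pos: "0 < D" using less.prems by (auto simp: D_def)
    have "cubic_coordinate n ((state (Suc b)) [b := 0])"
      using cubic_coordinate_update_zero cubic_coordinate_state less.prems by blast
    then have cM_b: "cM ! b \<le> 0" using cM_minimal[of b] cm_b D_pos less.prems by auto
    obtain t where t: "cm ! a < t" "cubic_coordinate n (cm[a := t])"
      using cm_increasable[OF a] by blast
    have "compatible D (cm[a := t] ! a) (cm[a := t] ! b)"
      using t(2) less.prems unfolding cubic_coordinate_iff_pairwise_cubic pairwise_cubic_def D_def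
      by blast
    then have "compatible D t (cm ! b)" using less.prems length_cm by simp
    then have "cm ! a < D" using t(1) cm_b by (auto simp: compatible_def)
    moreover have "cubic_coordinate n ((state (Suc a)) [a := D])"
      unfolding state_update[OF a]
    proof (rule cubic_coordinate_lower_entry)
      fix j assume j: "a < j" "j < n - 1" "int j - int a \<le> D"
      show "state a ! j \<le> D - (int j - int a)"
      proof (cases "j = b")
        case False
        then have "j < b" "b - j < b - a" using j less.prems by (auto simp: D_def)
        then have "\<not> (int b - int j < cM ! j \<and> cm ! b < - (int b - int j))"
          using less.hyps less.prems(2) by blast
        then show ?thesis using j cm_b by (auto simp: nth_state D_def)
      qed (use j cM_b in \<open>simp add: nth_state D_def\<close>)
    qed (use a D_pos D_lt cubic_coordinate_state nth_state in auto)
    ultimately have "cM ! a \<le> D" using cM_minimal[OF a] by blast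
    then show False using D_lt by simp
  qed
qed

lemma compatible_extremal_entries:
  assumes ij: "i < j" "j < n - 1" and x: "x \<in> {cm ! i, cM ! i}" and y: "y \<in> {cm ! j, cM ! j}"
  shows "compatible (int j - int i) x y"
proof -
  have "pairwise_cubic n (state p)" for p
    using cubic_coordinate_state cubic_coordinate_iff_pairwise_cubic by blast
  then have state: "compatible (int j - int i) (state p ! i) (state p ! j)" for p
    using ij unfolding pairwise_cubic_def by blast
  have mm: "compatible (int j - int i) (cm ! i) (cm ! j)"
    using state[of "n - 1"] ij by (simp add: nth_state)
  have MM: "compatible (int j - int i) (cM ! i) (cM ! j)"
    using state[of 0] ij by (simp add: nth_state)
  have mM: "compatible (int j - int i) (cm ! i) (cM ! j)"
    using state[of "Suc i"] ij by (simp add: nth_state)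
  have "cm ! i < cM ! i" "cm ! j < cM ! j" using cm_less_cM ij by auto
  then have Mm: "compatible (int j - int i) (cM ! i) (cm ! j)"
    using mm MM no_crossing[OF ij] unfolding compatible_def by linarith
  show ?thesis using x y mm MM mM Mm by auto
qed

end

theorem theorem4p7:
  fixes n :: nat and cm cM c :: "int list"
  assumes "is_cell n cm cM"
    and "length c = n - 1"
    and "\<forall>i < n - 1. c ! i = cm ! i \<or> c ! i = cM ! i"
  shows "cubic_coordinate n c"
proof -
  interpret cell n cm cM by (rule cell.intro) (rule assms(1))
  have "pairwise_cubic n cm" "pairwise_cubic n cM"
    using cubic_coordinate_cm cubic_coordinate_state[of 0]
    by (simp_all add: cubic_coordinate_iff_pairwise_cubic state_eq_cM)
  then have "- int i - 1 \<le> c ! i \<and> c ! i \<le> int n - int i - 1" if "i < n - 1" for i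
    using assms(3) that unfolding pairwise_cubic_def by metis
  moreover have "compatible (int j - int i) (c ! i) (c ! j)" if "i < j" "j < n - 1" for i j
    using compatible_extremal_entries[OF that] assms(3) that by simp
  ultimately show ?thesis
    using assms(2) by (simp add: cubic_coordinate_iff_pairwise_cubic pairwise_cubic_def)
qed

end
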